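(* Let $N>0$. There exists a contractible continuous family of $0$-cycles $F_N: S^1 \rightarrow \mathcal{Z}_0(S^1;\mathbb{Z})$ such that $\mathbf{M}(F_N(x)) \leq 2$ for all $x \in S^1$, and any family of fillings $H:S^1 \rightarrow I_1(S^1;\mathbb{Z})$ with $\partial H(x) = F_N(x)$ for all $x$ satisfies $\mathbf{M}(H(x_0))> N$ for some $x_0 \in S^1$.
   Context: $\mathcal{Z}_0(S^1;\mathbb{Z})$ is the space of flat integral $0$-cycles in the circle with the flat topology, $I_1(S^1;\mathbb{Z})$ the integral $1$-chains, $\mathbf{M}$ mass. A family of fillings means a continuous map $H$. *)

theory Defs
  imports "HOL-Analysis.Analysis"
begin

text \<open>The ambient circle S^1 (standard circle of length 2 pi) is parametrised by the
angle t in [0, 2 pi).  Integral 0-chains are finitely supported integer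
coefficient functions on [0, 2 pi).  Integral 1-chains in S^1 are integer-valued
BV functions (densities w.r.t. arc length); we use the canonical representative:
a 2 pi-periodic integer function, right-continuous (locally constant from the
right) with finitely many jump points per period.\<close>

definition is_chain0 :: "(real \<Rightarrow> int) \<Rightarrow> bool" where
  "is_chain0 T \<longleftrightarrow> finite {t. T t \<noteq> 0} \<and> {t. T t \<noteq> 0} \<subseteq> {0..<2*pi}"

definition mass0 :: "(real \<Rightarrow> int) \<Rightarrow> real" where
  "mass0 T = (\<Sum>t\<in>{t. T t \<noteq> 0}. real_of_int \<bar>T t\<bar>)"

definition jumps1 :: "(real \<Rightarrow> int) \<Rightarrow> real set" where
  "jumps1 g = {t \<in> {0..<2*pi}. \<not> (\<exists>e>0. \<forall>s. \<bar>s - t\<bar> < e \<longrightarrow> g s = g t)}"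

definition is_chain1 :: "(real \<Rightarrow> int) \<Rightarrow> bool" where
  "is_chain1 g \<longleftrightarrow> (\<forall>t. g (t + 2*pi) = g t)
     \<and> (\<forall>t. \<exists>e>0. \<forall>s. t \<le> s \<and> s < t + e \<longrightarrow> g s = g t)
     \<and> finite (jumps1 g)"

definition left_val :: "(real \<Rightarrow> int) \<Rightarrow> real \<Rightarrow> int" where
  "left_val g p = (THE c. \<forall>\<^sub>F s in at_left p. g s = c)"

text \<open>Boundary with the standard (counterclockwise) orientation:
  boundary of the indicator of [a,b) is delta_b - delta_a.\<close>
definition bd1 :: "(real \<Rightarrow> int) \<Rightarrow> (real \<Rightarrow> int)" where
  "bd1 g = (\<lambda>p. if p \<in> {0..<2*pi} then left_val g p - g p else 0)"

definition mass1 :: "(real \<Rightarrow> int) \<Rightarrow> real" where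
  "mass1 g = integral {0..2*pi} (\<lambda>t. real_of_int \<bar>g t\<bar>)"

definition cycles0 :: "(real \<Rightarrow> int) set" where
  "cycles0 = {T. is_chain0 T \<and> (\<exists>S. is_chain1 S \<and> bd1 S = T)}"

definition flat0 :: "(real \<Rightarrow> int) \<Rightarrow> real" where
  "flat0 T = (INF S \<in> {S. is_chain1 S}. mass0 (\<lambda>p. T p - bd1 S p) + mass1 S)"

definition flat_continuous_on :: "'a::metric_space set \<Rightarrow> ('a \<Rightarrow> (real \<Rightarrow> int)) \<Rightarrow> bool" where
  "flat_continuous_on A F \<longleftrightarrow> (\<forall>x\<in>A. \<forall>e>0. \<exists>d>0. \<forall>y\<in>A. dist y x < d \<longrightarrow>
      flat0 (\<lambda>p. F y p - F x p) < e)"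

text \<open>On 1-chains in S^1 the flat norm equals the mass (there are no nonzero
integral 2-currents in S^1).\<close>
definition mass_continuous_on :: "'a::metric_space set \<Rightarrow> ('a \<Rightarrow> (real \<Rightarrow> int)) \<Rightarrow> bool" where
  "mass_continuous_on A H \<longleftrightarrow> (\<forall>x\<in>A. \<forall>e>0. \<exists>d>0. \<forall>y\<in>A. dist y x < d \<longrightarrow>
      mass1 (\<lambda>p. H y p - H x p) < e)"

definition contractible_family :: "complex set \<Rightarrow> (complex \<Rightarrow> (real \<Rightarrow> int)) \<Rightarrow> bool" where
  "contractible_family S F \<longleftrightarrow> (\<exists>G :: real \<times> complex \<Rightarrow> (real \<Rightarrow> int).
      (\<forall>p\<in>{0..1} \<times> S. G p \<in> cycles0) \<and> flat_continuous_on ({0..1} \<times> S) G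
      \<and> (\<forall>x\<in>S. G (0, x) = F x) \<and> (\<exists>c. \<forall>x\<in>S. G (1, x) = c))"

end

theory Submission
  imports Defs
begin

text \<open>Let \<open>F x = \<delta>\<^bsub>a(x)\<^esub> - \<delta>\<^sub>0\<close> with \<open>a(x) = 2 N arccos (Re x)\<close> modulo \<open>2 pi\<close>:
the point \<open>a(x)\<close> runs a distance \<open>2 pi N\<close> around \<open>S\<^sup>1\<close> along the upper half circle and back
along the lower half. Scaling the angle by \<open>1 - s\<close> contracts the family to the zero cycle.
A filling of \<open>\<delta>\<^sub>a - \<delta>\<^sub>0\<close> is the arc \<open>[0, a)\<close> plus an integer constant \<open>c\<close>, so its
integral is \<open>a + 2 pi c\<close>. For a mass-continuous family of fillings \<open>H (cis \<theta>)\<close> this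
integral depends continuously on \<open>\<theta>\<close> and is congruent to \<open>2 N \<theta>\<close> modulo \<open>2 pi\<close>, so it
grows by exactly \<open>2 pi N\<close> from \<open>\<theta> = 0\<close> to \<open>\<theta> = pi\<close>. Since the mass bounds the absolute
value of the integral, the filling at \<open>\<theta> = 0\<close> or at \<open>\<theta> = pi\<close> has mass at least
\<open>pi N > N\<close>.\<close>

section \<open>Angles modulo 2 pi\<close>

definition wrap_angle :: "real \<Rightarrow> real" where
  "wrap_angle t = t - 2*pi * of_int \<lfloor>t/(2*pi)\<rfloor>"

lemma wrap_angle_eq_frac: "wrap_angle t = 2*pi * frac (t/(2*pi))"
  by (simp add: wrap_angle_def frac_def algebra_simps)

lemma wrap_angle_bounds: "0 \<le> wrap_angle t" "wrap_angle t < 2*pi"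
  using frac_lt_1[of "t/(2*pi)"] by (simp_all add: wrap_angle_eq_frac)

lemma wrap_angle_eqI:
  assumes "0 \<le> t - 2*pi * of_int k" "t - 2*pi * of_int k < 2*pi"
  shows "wrap_angle t = t - 2*pi * of_int k"
proof -
  have "\<lfloor>t/(2*pi)\<rfloor> = k"
    using assms by (simp add: floor_eq_iff field_simps)
  then show ?thesis by (simp add: wrap_angle_def)
qed

lemma wrap_angle_id: "0 \<le> t \<Longrightarrow> t < 2*pi \<Longrightarrow> wrap_angle t = t"
  using wrap_angle_eqI[of t 0] by simp

lemma wrap_angle_add_multiple: "wrap_angle (t + 2*pi * of_int k) = wrap_angle t"
proof -
  have "(t + 2*pi * of_int k) / (2*pi) = t/(2*pi) + of_int k"
    by (simp add: field_simps)
  then show ?thesis by (simp add: wrap_angle_eq_frac)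
qed

lemma wrap_angle_diff: "wrap_angle (wrap_angle b - wrap_angle a) = wrap_angle (b - a)"
proof -
  have "wrap_angle b - wrap_angle a = (b - a) + 2*pi * of_int (\<lfloor>a/(2*pi)\<rfloor> - \<lfloor>b/(2*pi)\<rfloor>)"
    by (simp add: wrap_angle_def algebra_simps)
  then show ?thesis by (simp only: wrap_angle_add_multiple)
qed

lemma wrap_angle_minus_self_in_Ints: "(wrap_angle t - t) / (2*pi) \<in> \<int>"
proof -
  have "(wrap_angle t - t) / (2*pi) = of_int (- \<lfloor>t/(2*pi)\<rfloor>)"
    by (simp add: wrap_angle_def)
  then show ?thesis by simp
qed

section \<open>Integral 1-chains on the circle\<close>

lemma constant_on_if_eventually_eq:
  assumes "connected S" and "\<And>p. p \<in> S \<Longrightarrow> \<forall>\<^sub>F s in at p within S. f s = f p"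
  shows "f constant_on S"
proof (rule locally_constant_imp_constant[OF \<open>connected S\<close>])
  fix p assume "p \<in> S"
  then obtain T where T: "open T" "p \<in> T" "\<forall>s\<in>T. s \<noteq> p \<longrightarrow> s \<in> S \<longrightarrow> f s = f p"
    using assms(2) unfolding eventually_at_topological by metis
  have "\<forall>s\<in>S \<inter> T. f s = f p"
    using T(3) by auto
  then show "\<exists>U. openin (top_of_set S) U \<and> p \<in> U \<and> (\<forall>s\<in>U. f s = f p)"
    using openin_open_Int[OF T(1)] \<open>p \<in> S\<close> T(2) by blast
qed

lemma is_chain1D:
  assumes "is_chain1 g"
  shows is_chain1_periodic: "g (t + 2*pi) = g t"
    and is_chain1_right_constant: "\<exists>e>0. \<forall>s. t \<le> s \<and> s < t + e \<longrightarrow> g s = g t"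
    and is_chain1_finite_jumps: "finite (jumps1 g)"
  using assms unfolding is_chain1_def by blast+

lemma is_chain1_periodic_int:
  assumes "is_chain1 g" shows "g (t + 2*pi * of_int k) = g t"
proof -
  have nat: "g (s + 2*pi * real n) = g s" for s n
  proof (induction n)
    case (Suc n)
    have "g (s + 2*pi * real (Suc n)) = g ((s + 2*pi * real n) + 2*pi)"
      by (simp add: algebra_simps)
    with Suc show ?case by (simp only: is_chain1_periodic[OF assms])
  qed simp
  show ?thesis
  proof (cases "k \<ge> 0")
    case True
    then have "2*pi * of_int k = 2*pi * real (nat k)" by simp
    then show ?thesis using nat[of t "nat k"] by metis
  next
    case False
    then have "t = (t + 2*pi * of_int k) + 2*pi * real (nat (-k))" by simp
    then show ?thesis using nat[of "t + 2*pi * of_int k" "nat (-k)"] by metis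
  qed
qed

lemma is_chain1_eq_wrap_angle:
  assumes "is_chain1 g" shows "g t = g (wrap_angle t)"
  using is_chain1_periodic_int[OF assms, of "wrap_angle t" "\<lfloor>t/(2*pi)\<rfloor>"]
  by (simp add: wrap_angle_def)

lemma left_val_eqI:
  assumes "\<forall>\<^sub>F s in at_left p. g s = c" shows "left_val g p = c"
  unfolding left_val_def
proof (rule the_equality)
  fix c' assume "\<forall>\<^sub>F s in at_left p. g s = c'"
  with assms have "\<forall>\<^sub>F s in at_left p. c' = c" by eventually_elim auto
  from eventually_happens[OF this] show "c' = c" by auto
qed (rule assms)

lemma constant_on_jump_free_interval:
  assumes "{a<..<b} \<subseteq> {0..<2*pi} - jumps1 g"
  shows "g constant_on {a<..<b}"
proof (rule constant_on_if_eventually_eq)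
  fix q assume "q \<in> {a<..<b}"
  then obtain r where r: "r > 0" "\<forall>s. \<bar>s - q\<bar> < r \<longrightarrow> g s = g q"
    using assms unfolding jumps1_def by blast
  then have "\<forall>s\<in>{a<..<b}. s \<noteq> q \<and> dist s q < r \<longrightarrow> g s = g q"
    unfolding dist_real_def by blast
  then show "\<forall>\<^sub>F s in at q within {a<..<b}. g s = g q"
    unfolding eventually_at using r(1) by blast
qed simp

lemma is_chain1_left_limit:
  assumes g: "is_chain1 g" shows "\<exists>c. \<forall>\<^sub>F s in at_left p. g s = c"
proof -
  define k where "k = \<lceil>p/(2*pi)\<rceil> - 1"
  define u where "u = p - 2*pi * of_int k"
  have "of_int k < p/(2*pi)" "p/(2*pi) \<le> of_int k + 1"
    unfolding k_def by linarith+
  then have u: "0 < u" "u \<le> 2*pi"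
    unfolding u_def by (simp_all add: field_simps)
  obtain d where d: "d > 0" "\<forall>j\<in>jumps1 g. j \<noteq> u \<longrightarrow> d \<le> dist u j"
    using finite_set_avoid[OF is_chain1_finite_jumps[OF g]] by blast
  define e where "e = min d u"
  have "e > 0" "e \<le> d" "e \<le> u"
    using d(1) u(1) by (simp_all add: e_def)
  have "{u-e<..<u} \<subseteq> {0..<2*pi} - jumps1 g"
  proof
    fix q assume q: "q \<in> {u-e<..<u}"
    have "q \<noteq> u" "dist u q < d"
      using q \<open>e \<le> d\<close> by (simp_all add: dist_real_def)
    then have "q \<notin> jumps1 g"
      using d(2) by fastforce
    then show "q \<in> {0..<2*pi} - jumps1 g"
      using q \<open>e \<le> u\<close> u(2) by simp
  qed
  then obtain c where c: "\<And>s. s \<in> {u-e<..<u} \<Longrightarrow> g s = c"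
    using constant_on_jump_free_interval unfolding constant_on_def by metis
  have "\<forall>\<^sub>F s in at_left p. s \<in> {p-e<..<p}"
    using eventually_at_left_real \<open>e > 0\<close> by simp
  then have "\<forall>\<^sub>F s in at_left p. g s = c"
  proof eventually_elim
    case (elim s)
    have "g s = g ((s - 2*pi * of_int k) + 2*pi * of_int k)" by simp
    also have "\<dots> = g (s - 2*pi * of_int k)" by (rule is_chain1_periodic_int[OF g])
    also have "\<dots> = c" using elim by (intro c) (simp add: u_def)
    finally show ?case .
  qed
  then show ?thesis by blast
qed

lemma is_chain1_eventually_left_val:
  assumes "is_chain1 g" shows "\<forall>\<^sub>F s in at_left p. g s = left_val g p"
  using is_chain1_left_limit[OF assms, of p] left_val_eqI by metis

lemma is_chain1_const: "is_chain1 (\<lambda>t. c)"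
proof -
  have "jumps1 (\<lambda>t. c) = {}"
    unfolding jumps1_def using zero_less_one by blast
  then show ?thesis
    unfolding is_chain1_def by (auto intro: exI[of _ 1])
qed

lemma jumps1_diff_subset: "jumps1 (\<lambda>t. f t - g t) \<subseteq> jumps1 f \<union> jumps1 g"
proof
  fix t assume t: "t \<in> jumps1 (\<lambda>t. f t - g t)"
  show "t \<in> jumps1 f \<union> jumps1 g"
  proof (rule ccontr)
    assume "t \<notin> jumps1 f \<union> jumps1 g"
    then obtain e1 e2 where e1: "e1 > 0" "\<forall>s. \<bar>s - t\<bar> < e1 \<longrightarrow> f s = f t"
      and e2: "e2 > 0" "\<forall>s. \<bar>s - t\<bar> < e2 \<longrightarrow> g s = g t"
      using t unfolding jumps1_def by blast
    have "f s - g s = f t - g t" if "\<bar>s - t\<bar> < min e1 e2" for s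
      using e1(2) e2(2) that by (metis min_less_iff_conj)
    moreover have "min e1 e2 > 0"
      using e1(1) e2(1) by simp
    ultimately show False
      using t unfolding jumps1_def by blast
  qed
qed

lemma is_chain1_diff:
  assumes f: "is_chain1 f" and g: "is_chain1 g" shows "is_chain1 (\<lambda>t. f t - g t)"
proof -
  have right: "\<exists>e>0. \<forall>s. t \<le> s \<and> s < t + e \<longrightarrow> f s - g s = f t - g t" for t
  proof -
    obtain e1 e2 where e1: "e1 > 0" "\<forall>s. t \<le> s \<and> s < t + e1 \<longrightarrow> f s = f t"
      and e2: "e2 > 0" "\<forall>s. t \<le> s \<and> s < t + e2 \<longrightarrow> g s = g t"
      using is_chain1_right_constant[OF f] is_chain1_right_constant[OF g] by metis
    have "f s - g s = f t - g t" if "t \<le> s" "s < t + min e1 e2" for s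
    proof -
      have "s < t + e1" "s < t + e2"
        using that(2) by (simp_all add: min_def split: if_splits)
      then show ?thesis
        using e1(2) e2(2) that(1) by metis
    qed
    moreover have "min e1 e2 > 0"
      using e1(1) e2(1) by simp
    ultimately show ?thesis by blast
  qed
  have "finite (jumps1 (\<lambda>t. f t - g t))"
    using jumps1_diff_subset is_chain1_finite_jumps[OF f] is_chain1_finite_jumps[OF g]
    by (meson finite_Un finite_subset)
  then show ?thesis
    using right is_chain1_periodic[OF f] is_chain1_periodic[OF g] unfolding is_chain1_def by simp
qed

lemma bd1_diff:
  assumes f: "is_chain1 f" and g: "is_chain1 g"
  shows "bd1 (\<lambda>t. f t - g t) = (\<lambda>p. bd1 f p - bd1 g p)"
proof
  fix p
  have "\<forall>\<^sub>F s in at_left p. f s - g s = left_val f p - left_val g p"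
    using is_chain1_eventually_left_val[OF f, of p] is_chain1_eventually_left_val[OF g, of p]
    by eventually_elim simp
  then have "left_val (\<lambda>t. f t - g t) p = left_val f p - left_val g p"
    by (rule left_val_eqI)
  then show "bd1 (\<lambda>t. f t - g t) p = bd1 f p - bd1 g p" unfolding bd1_def by simp
qed

lemma bd1_const: "bd1 (\<lambda>t. c) = (\<lambda>p. 0)"
proof
  fix p
  have "left_val (\<lambda>t. c) p = c" by (rule left_val_eqI) simp
  then show "bd1 (\<lambda>t. c) p = 0" unfolding bd1_def by simp
qed

lemma is_chain1_bd1_zero_imp_const:
  assumes g: "is_chain1 g" and bd: "bd1 g = (\<lambda>p. 0)"
  shows "g t = g 0"
proof -
  have "g constant_on {0..<2*pi}"
  proof (rule constant_on_if_eventually_eq)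
    fix p :: real assume p: "p \<in> {0..<2*pi}"
    then have "left_val g p = g p" using fun_cong[OF bd, of p] by (simp add: bd1_def)
    then have "\<forall>\<^sub>F s in at_left p. g s = g p"
      using is_chain1_eventually_left_val[OF g, of p] by simp
    moreover obtain e where "e > 0" "\<forall>s. p \<le> s \<and> s < p + e \<longrightarrow> g s = g p"
      using is_chain1_right_constant[OF g] by blast
    then have "\<forall>\<^sub>F s in at_right p. g s = g p"
      by (intro eventually_at_rightI[of p "p + e"]) (meson greaterThanLessThan_iff less_imp_le, simp)
    ultimately have "\<forall>\<^sub>F s in at p. g s = g p"
      by (simp add: eventually_at_split)
    then show "\<forall>\<^sub>F s in at p within {0..<2*pi}. g s = g p"
      by (rule filter_leD[OF at_le[OF subset_UNIV]])
  qed simp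
  moreover have "wrap_angle t \<in> {0..<2*pi}" "(0::real) \<in> {0..<2*pi}"
    using wrap_angle_bounds[of t] by auto
  ultimately have "g (wrap_angle t) = g 0"
    unfolding constant_on_def by metis
  then show ?thesis using is_chain1_eq_wrap_angle[OF g] by simp
qed

section \<open>Arcs from angle 0 and their boundaries\<close>

definition arc_chain :: "real \<Rightarrow> real \<Rightarrow> int" where
  "arc_chain a t = (if wrap_angle t < a then 1 else 0)"

definition point_pair :: "real \<Rightarrow> real \<Rightarrow> int" where
  "point_pair a p = (if p = a then 1 else 0) - (if p = 0 then 1 else 0)"

lemma arc_chain_eq_indicator:
  "0 \<le> t \<Longrightarrow> t < 2*pi \<Longrightarrow> arc_chain a t = (if t < a then 1 else 0)"
  by (simp add: arc_chain_def wrap_angle_id)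

lemma arc_chain_right_constant:
  "\<exists>e>0. \<forall>s. t \<le> s \<and> s < t + e \<longrightarrow> arc_chain a s = arc_chain a t"
proof -
  define u where "u = wrap_angle t"
  define e where "e = (if u < a then min (a - u) (2*pi - u) else 2*pi - u)"
  have u: "0 \<le> u" "u < 2*pi"
    using wrap_angle_bounds unfolding u_def by auto
  have t: "t - 2*pi * of_int \<lfloor>t/(2*pi)\<rfloor> = u"
    by (simp add: u_def wrap_angle_def)
  have "e > 0"
    using u by (simp add: e_def)
  moreover have "arc_chain a s = arc_chain a t" if "t \<le> s" "s < t + e" for s
  proof -
    have "e \<le> 2*pi - u"
      by (simp add: e_def)
    then have "wrap_angle s = u + (s - t)"
      using wrap_angle_eqI[of s "\<lfloor>t/(2*pi)\<rfloor>"] t that u by simp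
    then show ?thesis
      using that unfolding arc_chain_def u_def[symmetric] e_def by (auto split: if_splits)
  qed
  ultimately show ?thesis by blast
qed

lemma jumps1_arc_chain: "jumps1 (arc_chain a) \<subseteq> {0, a}"
proof
  fix t assume t: "t \<in> jumps1 (arc_chain a)"
  then have t02: "0 \<le> t" "t < 2*pi"
    unfolding jumps1_def by auto
  show "t \<in> {0, a}"
  proof (rule ccontr)
    assume "t \<notin> {0, a}"
    then have "min (min t (2*pi - t)) \<bar>t - a\<bar> > 0"
      using t02 by auto
    moreover have "arc_chain a s = arc_chain a t" if "\<bar>s - t\<bar> < min (min t (2*pi - t)) \<bar>t - a\<bar>" for s
    proof -
      have "0 \<le> s" "s < 2*pi" "(s < a) = (t < a)"
        using that by linarith+
      then show ?thesis
        using t02 by (simp add: arc_chain_eq_indicator)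
    qed
    ultimately show False
      using t unfolding jumps1_def by blast
  qed
qed

lemma is_chain1_arc_chain: "is_chain1 (arc_chain a)"
proof -
  have "arc_chain a (t + 2*pi) = arc_chain a t" for t
    using wrap_angle_add_multiple[of t 1] by (simp add: arc_chain_def)
  then show ?thesis
    unfolding is_chain1_def
    using arc_chain_right_constant finite_subset[OF jumps1_arc_chain] by blast
qed

lemma left_val_arc_chain:
  assumes "0 \<le> a" "a < 2*pi" "0 \<le> p" "p < 2*pi"
  shows "left_val (arc_chain a) p = (if 0 < p \<and> p \<le> a then 1 else 0)"
proof (rule left_val_eqI)
  consider "p = 0" | "0 < p" "p \<le> a" | "a < p"
    using assms by linarith
  then show "\<forall>\<^sub>F s in at_left p. arc_chain a s = (if 0 < p \<and> p \<le> a then 1 else 0)"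
  proof cases
    case 1
    \<comment> \<open>Just below angle \<open>0\<close> we are just below \<open>2 pi\<close>, outside the arc.\<close>
    have "a - 2*pi < p"
      using assms 1 by simp
    from eventually_at_left_real[OF this] show ?thesis
    proof eventually_elim
      case (elim s)
      have "wrap_angle s = s - 2*pi * of_int (-1)"
        using elim 1 assms by (intro wrap_angle_eqI) auto
      then show ?case
        using elim 1 by (simp add: arc_chain_def)
    qed
  next
    case 2
    from eventually_at_left_real[OF 2(1)] show ?thesis
      by eventually_elim (use 2 assms in \<open>simp add: arc_chain_eq_indicator\<close>)
  next
    case 3
    from eventually_at_left_real[OF 3] show ?thesis
      by eventually_elim (use 3 assms in \<open>simp add: arc_chain_eq_indicator\<close>)
  qed
qed

lemma bd1_arc_chain:
  assumes "0 \<le> a" "a < 2*pi"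
  shows "bd1 (arc_chain a) = point_pair a"
proof
  fix p
  show "bd1 (arc_chain a) p = point_pair a p"
  proof (cases "0 \<le> p \<and> p < 2*pi")
    case True
    then show ?thesis
      using assms left_val_arc_chain[OF assms, of p]
      by (auto simp: bd1_def point_pair_def arc_chain_eq_indicator)
  next
    case False
    then show ?thesis
      using assms by (auto simp: bd1_def point_pair_def)
  qed
qed

lemma has_integral_indicator_Ico:
  fixes a b \<alpha> \<beta> :: real
  assumes "a \<le> \<alpha>" "\<alpha> \<le> \<beta>" "\<beta> \<le> b"
  shows "((\<lambda>t. if \<alpha> \<le> t \<and> t < \<beta> then 1 else 0) has_integral (\<beta> - \<alpha>)) {a..b}"
proof -
  have "((\<lambda>t. if t \<in> {\<alpha>..\<beta>} then 1 else 0::real) has_integral (\<beta> - \<alpha>)) {a..b}"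
    using has_integral_restrict_Int[of "{\<alpha>..\<beta>}" "\<lambda>t. 1::real" "\<beta> - \<alpha>" "{a..b}"]
      has_integral_const_real[of "1::real" \<alpha> \<beta>] assms
    by (simp add: Int_absorb2)
  then show ?thesis
    by (rule has_integral_spike_finite[of "{\<beta>}", rotated 2]) auto
qed

lemma has_integral_arc_chain:
  assumes "0 \<le> a" "a < 2*pi"
  shows "((\<lambda>t. real_of_int (arc_chain a t)) has_integral a) {0..2*pi}"
proof -
  have "((\<lambda>t. if 0 \<le> t \<and> t < a then 1 else 0) has_integral a) {0..2*pi}"
    using has_integral_indicator_Ico[of 0 0 a "2*pi"] assms by simp
  then show ?thesis
    by (rule has_integral_spike_finite[of "{2*pi}", rotated 2]) (auto simp: arc_chain_eq_indicator)
qed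

lemma filling_of_point_pair:
  assumes S: "is_chain1 S" and bd: "bd1 S = point_pair a" and a: "0 \<le> a" "a < 2*pi"
  shows "S t = arc_chain a t + (S 0 - arc_chain a 0)"
proof -
  have D: "is_chain1 (\<lambda>t. S t - arc_chain a t)"
    using S is_chain1_arc_chain by (rule is_chain1_diff)
  have "bd1 (\<lambda>t. S t - arc_chain a t) = (\<lambda>p. 0)"
    using bd1_diff[OF S is_chain1_arc_chain] bd bd1_arc_chain[OF a] by simp
  from is_chain1_bd1_zero_imp_const[OF D this, of t] show ?thesis by linarith
qed

lemma integral_filling_of_point_pair:
  assumes "is_chain1 S" "bd1 S = point_pair a" "0 \<le> a" "a < 2*pi"
  obtains m :: int where "((\<lambda>t. real_of_int (S t)) has_integral (a + 2*pi*m)) {0..2*pi}"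
    and "\<And>t. \<bar>S t\<bar> \<le> 1 + \<bar>m\<bar>"
proof
  define m where "m = S 0 - arc_chain a 0"
  have S: "S t = arc_chain a t + m" for t
    unfolding m_def using filling_of_point_pair[OF assms] .
  have "((\<lambda>t. real_of_int (arc_chain a t) + real_of_int m) has_integral (a + 2*pi*m)) {0..2*pi}"
    using has_integral_add[OF has_integral_arc_chain[OF assms(3,4)]
        has_integral_const_real[of "real_of_int m" 0 "2*pi"]] by simp
  then show "((\<lambda>t. real_of_int (S t)) has_integral (a + 2*pi*m)) {0..2*pi}"
    by (simp add: S)
  show "\<bar>S t\<bar> \<le> 1 + \<bar>m\<bar>" for t
    using abs_triangle_ineq[of 1 m] by (simp add: S arc_chain_def)
qed

lemma point_pair_in_cycles0:
  assumes "0 \<le> a" "a < 2*pi" shows "point_pair a \<in> cycles0"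
proof -
  have "{p. point_pair a p \<noteq> 0} \<subseteq> {a, 0}"
    by (auto simp: point_pair_def)
  then have "is_chain0 (point_pair a)"
    unfolding is_chain0_def using assms by (auto intro: finite_subset)
  then show ?thesis
    unfolding cycles0_def using is_chain1_arc_chain bd1_arc_chain[OF assms] by blast
qed

lemma mass0_point_pair_le: "mass0 (point_pair a) \<le> 2"
proof -
  have supp: "{p. point_pair a p \<noteq> 0} \<subseteq> {a, 0}"
    by (auto simp: point_pair_def)
  have "mass0 (point_pair a) \<le> real (card {p. point_pair a p \<noteq> 0}) * 1"
    unfolding mass0_def by (rule sum_bounded_above) (auto simp: point_pair_def)
  also have "\<dots> \<le> real (card {a, 0::real})"
    using card_mono[OF _ supp] by simp
  also have "\<dots> \<le> 2"
    by (simp add: card_insert_le_m1)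
  finally show ?thesis .
qed

definition arc_between :: "real \<Rightarrow> real \<Rightarrow> real \<Rightarrow> int" where
  "arc_between \<alpha> \<beta> = (\<lambda>t. (arc_chain \<beta> t - arc_chain \<alpha> t) - (if \<beta> < \<alpha> then -1 else 0))"

lemma is_chain1_arc_between: "is_chain1 (arc_between \<alpha> \<beta>)"
  unfolding arc_between_def by (intro is_chain1_diff is_chain1_arc_chain is_chain1_const)

lemma bd1_arc_between:
  assumes "0 \<le> \<alpha>" "\<alpha> < 2*pi" "0 \<le> \<beta>" "\<beta> < 2*pi"
  shows "bd1 (arc_between \<alpha> \<beta>) = (\<lambda>p. point_pair \<beta> p - point_pair \<alpha> p)"
proof -
  have arcs: "is_chain1 (\<lambda>t. arc_chain \<beta> t - arc_chain \<alpha> t)"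
    by (intro is_chain1_diff is_chain1_arc_chain)
  have "bd1 (arc_between \<alpha> \<beta>) = (\<lambda>p. bd1 (\<lambda>t. arc_chain \<beta> t - arc_chain \<alpha> t) p
      - bd1 (\<lambda>t. if \<beta> < \<alpha> then -1 else 0) p)"
    unfolding arc_between_def using arcs is_chain1_const by (rule bd1_diff)
  then show ?thesis
    by (simp add: bd1_diff[OF is_chain1_arc_chain is_chain1_arc_chain] bd1_const
        bd1_arc_chain assms)
qed

lemma mass1_arc_between:
  assumes \<alpha>: "0 \<le> \<alpha>" "\<alpha> < 2*pi" and \<beta>: "0 \<le> \<beta>" "\<beta> < 2*pi"
  shows "mass1 (arc_between \<alpha> \<beta>) = wrap_angle (\<beta> - \<alpha>)"
proof -
  have "((\<lambda>t. real_of_int \<bar>arc_between \<alpha> \<beta> t\<bar>) has_integral wrap_angle (\<beta> - \<alpha>)) {0..2*pi}"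
  proof (cases "\<alpha> \<le> \<beta>")
    case True
    have "((\<lambda>t. if \<alpha> \<le> t \<and> t < \<beta> then 1 else 0) has_integral (\<beta> - \<alpha>)) {0..2*pi}"
      using True \<alpha> \<beta> by (intro has_integral_indicator_Ico) auto
    then have "((\<lambda>t. real_of_int \<bar>arc_between \<alpha> \<beta> t\<bar>) has_integral (\<beta> - \<alpha>)) {0..2*pi}"
      by (rule has_integral_spike_finite[of "{2*pi}", rotated 2])
        (use True in \<open>auto simp: arc_between_def arc_chain_eq_indicator\<close>)
    then show ?thesis
      using True \<beta> \<alpha> by (simp add: wrap_angle_id)
  next
    case False
    \<comment> \<open>Then the arc from \<open>\<alpha>\<close> to \<open>\<beta>\<close> passes through angle \<open>0\<close>.\<close>
    have "((\<lambda>t. (if 0 \<le> t \<and> t < \<beta> then 1 else 0) + (if \<alpha> \<le> t \<and> t < 2*pi then 1 else 0))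
        has_integral ((\<beta> - 0) + (2*pi - \<alpha>))) {0..2*pi}"
      using False \<alpha> \<beta> by (intro has_integral_add has_integral_indicator_Ico) auto
    then have "((\<lambda>t. real_of_int \<bar>arc_between \<alpha> \<beta> t\<bar>) has_integral ((\<beta> - 0) + (2*pi - \<alpha>)))
        {0..2*pi}"
      by (rule has_integral_spike_finite[of "{2*pi}", rotated 2])
        (use False in \<open>auto simp: arc_between_def arc_chain_eq_indicator\<close>)
    moreover have "wrap_angle (\<beta> - \<alpha>) = (\<beta> - 0) + (2*pi - \<alpha>)"
      using wrap_angle_eqI[of "\<beta> - \<alpha>" "-1"] False \<alpha> \<beta> by simp
    ultimately show ?thesis by simp
  qed
  then show ?thesis
    unfolding mass1_def by (rule integral_unique)
qed

section \<open>Flat norm and mass estimates\<close>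

lemma mass0_nonneg: "0 \<le> mass0 T"
  unfolding mass0_def by (rule sum_nonneg) simp

lemma mass1_nonneg: "0 \<le> mass1 g"
  unfolding mass1_def
  by (cases "(\<lambda>t. real_of_int \<bar>g t\<bar>) integrable_on {0..2*pi}")
    (simp_all add: integral_nonneg not_integrable_integral)

lemma flat0_bd1_le_mass1:
  assumes "is_chain1 S" shows "flat0 (bd1 S) \<le> mass1 S"
proof -
  have "flat0 (bd1 S) \<le> mass0 (\<lambda>p. bd1 S p - bd1 S p) + mass1 S"
    unfolding flat0_def
  proof (rule cINF_lower)
    show "bdd_below ((\<lambda>S'. mass0 (\<lambda>p. bd1 S p - bd1 S' p) + mass1 S') ` {S. is_chain1 S})"
      by (rule bdd_belowI2[of _ 0]) (simp add: mass0_nonneg mass1_nonneg)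
  qed (use assms in simp)
  then show ?thesis by (simp add: mass0_def)
qed

lemma flat0_point_pair_diff_le:
  assumes "\<bar>b - a\<bar> < 2*pi"
  shows "flat0 (\<lambda>p. point_pair (wrap_angle b) p - point_pair (wrap_angle a) p) \<le> \<bar>b - a\<bar>"
proof (cases "a \<le> b")
  case True
  have "mass1 (arc_between (wrap_angle a) (wrap_angle b)) = \<bar>b - a\<bar>"
    using True assms by (simp add: mass1_arc_between wrap_angle_bounds wrap_angle_diff wrap_angle_id)
  then show ?thesis
    using flat0_bd1_le_mass1[OF is_chain1_arc_between[of "wrap_angle a" "wrap_angle b"]]
    by (simp add: bd1_arc_between wrap_angle_bounds)
next
  case False
  define S where "S t = 0 - arc_between (wrap_angle b) (wrap_angle a) t" for t
  have "is_chain1 S"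
    unfolding S_def using is_chain1_const is_chain1_arc_between by (rule is_chain1_diff)
  moreover have "bd1 S = (\<lambda>p. bd1 (\<lambda>t. 0) p - bd1 (arc_between (wrap_angle b) (wrap_angle a)) p)"
    unfolding S_def using is_chain1_const is_chain1_arc_between by (rule bd1_diff)
  then have "bd1 S = (\<lambda>p. point_pair (wrap_angle b) p - point_pair (wrap_angle a) p)"
    by (simp add: bd1_const bd1_arc_between wrap_angle_bounds)
  moreover have "mass1 S = mass1 (arc_between (wrap_angle b) (wrap_angle a))"
    by (simp add: S_def mass1_def)
  then have "mass1 S = \<bar>b - a\<bar>"
    using False assms
    by (simp add: mass1_arc_between wrap_angle_bounds wrap_angle_diff wrap_angle_id)
  ultimately show ?thesis
    using flat0_bd1_le_mass1 by metis
qed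

lemma flat_continuous_on_point_pair:
  assumes "continuous_on A \<tau>"
  shows "flat_continuous_on A (\<lambda>x. point_pair (wrap_angle (\<tau> x)))"
  unfolding flat_continuous_on_def
proof (intro ballI allI impI)
  fix x e assume "x \<in> A" "(0::real) < e"
  moreover have "min e (2*pi) > 0"
    using \<open>0 < e\<close> by simp
  ultimately obtain d where "d > 0" and d: "\<forall>y\<in>A. dist y x < d \<longrightarrow> dist (\<tau> y) (\<tau> x) < min e (2*pi)"
    using assms unfolding continuous_on_iff by blast
  have "flat0 (\<lambda>p. point_pair (wrap_angle (\<tau> y)) p - point_pair (wrap_angle (\<tau> x)) p) < e"
    if "y \<in> A" "dist y x < d" for y
  proof -
    have "dist (\<tau> y) (\<tau> x) < min e (2*pi)"
      using d that by blast
    then have "\<bar>\<tau> y - \<tau> x\<bar> < e" "\<bar>\<tau> y - \<tau> x\<bar> < 2*pi"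
      by (simp_all add: dist_real_def)
    then show ?thesis
      using flat0_point_pair_diff_le[of "\<tau> y" "\<tau> x"] by linarith
  qed
  then show "\<exists>d>0. \<forall>y\<in>A. dist y x < d \<longrightarrow>
      flat0 (\<lambda>p. point_pair (wrap_angle (\<tau> y)) p - point_pair (wrap_angle (\<tau> x)) p) < e"
    using \<open>d > 0\<close> by blast
qed

lemma abs_integral_le_mass1:
  assumes I: "((\<lambda>t. real_of_int (g t)) has_integral I) {0..2*pi}" and B: "\<And>t. \<bar>g t\<bar> \<le> B"
  shows "\<bar>I\<bar> \<le> mass1 g"
proof -
  have "(\<lambda>t. real_of_int (g t)) absolutely_integrable_on {0..2*pi}"
    using I B
    by (intro absolutely_integrable_integrable_bound[where g = "\<lambda>_. real_of_int B"])
      (auto simp flip: of_int_abs)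
  then have "(\<lambda>t. real_of_int \<bar>g t\<bar>) integrable_on {0..2*pi}"
    by (simp add: absolutely_integrable_on_def)
  then have "norm (integral {0..2*pi} (\<lambda>t. real_of_int (g t))) \<le> mass1 g"
    unfolding mass1_def using I by (intro integral_norm_bound_integral) auto
  then show ?thesis
    using integral_unique[OF I] by simp
qed

lemma mass_continuous_on_subset:
  "mass_continuous_on A H \<Longrightarrow> B \<subseteq> A \<Longrightarrow> mass_continuous_on B H"
  unfolding mass_continuous_on_def by (meson subsetD)

lemma continuous_on_integral_if_mass_continuous:
  assumes H: "mass_continuous_on A H"
    and I: "\<And>x. x \<in> A \<Longrightarrow> ((\<lambda>t. real_of_int (H x t)) has_integral I x) {0..2*pi}"
    and B: "\<And>x. x \<in> A \<Longrightarrow> \<exists>B. \<forall>t. \<bar>H x t\<bar> \<le> B"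
  shows "continuous_on A I"
  unfolding continuous_on_iff
proof (intro ballI allI impI)
  fix x e assume x: "x \<in> A" and "(0::real) < e"
  then obtain d where "d > 0" and d: "\<forall>y\<in>A. dist y x < d \<longrightarrow> mass1 (\<lambda>p. H y p - H x p) < e"
    using H unfolding mass_continuous_on_def by blast
  have "dist (I y) (I x) < e" if y: "y \<in> A" "dist y x < d" for y
  proof -
    obtain Bx By where "\<forall>t. \<bar>H x t\<bar> \<le> Bx" "\<forall>t. \<bar>H y t\<bar> \<le> By"
      using B x y(1) by metis
    then have "\<bar>H y t - H x t\<bar> \<le> By + Bx" for t
      by (meson abs_triangle_ineq4 add_mono order_trans)
    moreover have "((\<lambda>t. real_of_int (H y t - H x t)) has_integral (I y - I x)) {0..2*pi}"
      using has_integral_diff[OF I[OF y(1)] I[OF x]] by simp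
    ultimately have "\<bar>I y - I x\<bar> \<le> mass1 (\<lambda>p. H y p - H x p)"
      using abs_integral_le_mass1[of "\<lambda>t. H y t - H x t"] by blast
    moreover have "mass1 (\<lambda>p. H y p - H x p) < e"
      using d y by blast
    ultimately show ?thesis
      by (simp add: dist_real_def)
  qed
  then show "\<exists>d>0. \<forall>y\<in>A. dist y x < d \<longrightarrow> dist (I y) (I x) < e"
    using \<open>d > 0\<close> by blast
qed

section \<open>Winding families of point pairs\<close>

lemma continuous_on_Ints_imp_constant:
  fixes f :: "'a::topological_space \<Rightarrow> real"
  assumes "connected S" "continuous_on S f" "\<And>x. x \<in> S \<Longrightarrow> f x \<in> \<int>"
  shows "f constant_on S"
  using assms(1,2)
proof (rule continuous_discrete_range_constant)
  fix x assume "x \<in> S"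
  then have "\<forall>y. y \<in> S \<and> f y \<noteq> f x \<longrightarrow> 1 \<le> norm (f y - f x)"
    using assms(3) by (auto intro: Ints_nonzero_abs_ge1)
  then show "\<exists>e>0. \<forall>y. y \<in> S \<and> f y \<noteq> f x \<longrightarrow> e \<le> norm (f y - f x)"
    using zero_less_one by blast
qed

definition winding_pair :: "real \<Rightarrow> complex \<Rightarrow> real \<Rightarrow> int" where
  "winding_pair r x = point_pair (wrap_angle (r * arccos (Re x)))"

lemma winding_pair_in_cycles0: "winding_pair r x \<in> cycles0"
  unfolding winding_pair_def using point_pair_in_cycles0 wrap_angle_bounds by blast

lemma mass0_winding_pair_le: "mass0 (winding_pair r x) \<le> 2"
  unfolding winding_pair_def by (rule mass0_point_pair_le)

lemma flat_continuous_on_winding_pair: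
  assumes "continuous_on A \<rho>" "continuous_on A \<xi>" "\<xi> ` A \<subseteq> sphere 0 1"
  shows "flat_continuous_on A (\<lambda>p. winding_pair (\<rho> p) (\<xi> p))"
proof -
  have "Re (\<xi> p) \<in> {-1..1}" if "p \<in> A" for p
    using abs_Re_le_cmod[of "\<xi> p"] assms(3) that by auto
  then show ?thesis
    unfolding winding_pair_def using assms(1,2)
    by (intro flat_continuous_on_point_pair continuous_intros) auto
qed

lemma contractible_family_winding_pair: "contractible_family (sphere 0 1) (winding_pair r)"
  unfolding contractible_family_def
proof (intro exI[of _ "\<lambda>p. winding_pair ((1 - fst p) * r) (snd p)"] conjI)
  show "flat_continuous_on ({0..1} \<times> sphere 0 1) (\<lambda>p. winding_pair ((1 - fst p) * r) (snd p))"
    by (intro flat_continuous_on_winding_pair continuous_intros) auto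
  show "\<exists>c. \<forall>x\<in>sphere 0 1. winding_pair ((1 - fst (1, x)) * r) (snd (1, x)) = c"
    by (intro exI[of _ "point_pair 0"]) (simp add: winding_pair_def wrap_angle_id)
qed (simp_all add: winding_pair_in_cycles0)

lemma integral_filling_of_winding_pair:
  assumes "is_chain1 S" "bd1 S = winding_pair r (cis \<theta>)" "0 \<le> \<theta>" "\<theta> \<le> pi"
  obtains m :: int
  where "((\<lambda>t. real_of_int (S t)) has_integral (wrap_angle (r * \<theta>) + 2*pi*m)) {0..2*pi}"
    and "\<And>t. \<bar>S t\<bar> \<le> 1 + \<bar>m\<bar>"
proof -
  have "arccos (Re (cis \<theta>)) = \<theta>"
    using assms(3,4) by (simp add: arccos_cos)
  then have "bd1 S = point_pair (wrap_angle (r * \<theta>))"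
    using assms(2) by (simp add: winding_pair_def)
  from integral_filling_of_point_pair[OF assms(1) this wrap_angle_bounds] that show ?thesis
    by blast
qed

lemma integral_winding_pair_filling_increment:
  assumes H: "\<And>x. x \<in> sphere 0 1 \<Longrightarrow> is_chain1 (H x) \<and> bd1 (H x) = winding_pair r x"
    and mc: "mass_continuous_on (sphere 0 1) H"
  shows "integral {0..2*pi} (\<lambda>t. real_of_int (H (-1) t))
    - integral {0..2*pi} (\<lambda>t. real_of_int (H 1 t)) = pi * r"
proof -
  define I where "I x = integral {0..2*pi} (\<lambda>t. real_of_int (H x t))" for x
  define k where "k \<theta> = (I (cis \<theta>) - r * \<theta>) / (2*pi)" for \<theta>
  have I: "((\<lambda>t. real_of_int (H (cis \<theta>) t)) has_integral I (cis \<theta>)) {0..2*pi}"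
    "\<exists>B. \<forall>t. \<bar>H (cis \<theta>) t\<bar> \<le> B" and k: "k \<theta> \<in> \<int>" if \<theta>: "\<theta> \<in> {0..pi}" for \<theta>
  proof -
    obtain m :: int where m: "((\<lambda>t. real_of_int (H (cis \<theta>) t)) has_integral
        (wrap_angle (r * \<theta>) + 2*pi*m)) {0..2*pi}" "\<And>t. \<bar>H (cis \<theta>) t\<bar> \<le> 1 + \<bar>m\<bar>"
      using H[of "cis \<theta>"] \<theta> by (auto elim: integral_filling_of_winding_pair)
    then show "((\<lambda>t. real_of_int (H (cis \<theta>) t)) has_integral I (cis \<theta>)) {0..2*pi}"
      "\<exists>B. \<forall>t. \<bar>H (cis \<theta>) t\<bar> \<le> B"
      unfolding I_def by (blast intro: integrable_integral has_integral_integrable)+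
    have "k \<theta> = (wrap_angle (r * \<theta>) - r * \<theta>) / (2*pi) + m"
      using integral_unique[OF m(1)]
      unfolding k_def I_def by (simp add: add_divide_distrib diff_divide_distrib)
    then show "k \<theta> \<in> \<int>"
      using wrap_angle_minus_self_in_Ints by simp
  qed
  have "continuous_on (cis ` {0..pi}) I"
  proof (rule continuous_on_integral_if_mass_continuous)
    show "mass_continuous_on (cis ` {0..pi}) H"
      using mc by (rule mass_continuous_on_subset) auto
  qed (use I in blast)+
  then have "continuous_on {0..pi} (\<lambda>\<theta>. I (cis \<theta>))"
    by (rule continuous_on_compose2) (auto intro: continuous_intros)
  then have "continuous_on {0..pi} k"
    unfolding k_def by (intro continuous_intros) simp_all
  then have "k constant_on {0..pi}"
    using k by (intro continuous_on_Ints_imp_constant) auto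
  then have "k pi = k 0"
    unfolding constant_on_def by force
  then show ?thesis
    unfolding k_def I_def by (simp add: field_simps)
qed

lemma abs_integral_filling_le_mass1:
  assumes "is_chain1 S" "bd1 S = point_pair a" "0 \<le> a" "a < 2*pi"
  shows "\<bar>integral {0..2*pi} (\<lambda>t. real_of_int (S t))\<bar> \<le> mass1 S"
proof -
  obtain m :: int where "((\<lambda>t. real_of_int (S t)) has_integral (a + 2*pi*m)) {0..2*pi}"
    and "\<And>t. \<bar>S t\<bar> \<le> 1 + \<bar>m\<bar>"
    using integral_filling_of_point_pair[OF assms] by blast
  then show ?thesis
    using abs_integral_le_mass1 integral_unique by metis
qed

lemma winding_pair_filling_mass_gt:
  assumes "N > 0"
    and H: "\<And>x. x \<in> sphere 0 1 \<Longrightarrow> is_chain1 (H x) \<and> bd1 (H x) = winding_pair (2 * N) x"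
    and mc: "mass_continuous_on (sphere 0 1) H"
  shows "\<exists>x\<in>sphere 0 1. mass1 (H x) > N"
proof (rule ccontr)
  assume "\<not> ?thesis"
  then have mass_le: "mass1 (H x) \<le> N" if "x \<in> sphere 0 1" for x
    using that by force
  have "\<bar>integral {0..2*pi} (\<lambda>t. real_of_int (H x t))\<bar> \<le> N" if "x \<in> sphere 0 1" for x
    using abs_integral_filling_le_mass1[of "H x"] H[OF that] wrap_angle_bounds mass_le[OF that]
    unfolding winding_pair_def by fastforce
  from this[of "-1"] this[of 1] have "pi * (2 * N) \<le> 2 * N"
    using integral_winding_pair_filling_increment[OF H mc] unfolding abs_le_iff by simp
  moreover have "1 * (2 * N) < pi * (2 * N)"
    using \<open>N > 0\<close> pi_gt3 by (intro mult_strict_right_mono) auto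
  ultimately show False
    by simp
qed

theorem proposition3p6:
  fixes N :: real
  assumes "N > 0"
  shows "\<exists>F :: complex \<Rightarrow> (real \<Rightarrow> int).
     (\<forall>x\<in>sphere 0 1. F x \<in> cycles0)
     \<and> flat_continuous_on (sphere 0 1) F
     \<and> contractible_family (sphere 0 1) F
     \<and> (\<forall>x\<in>sphere 0 1. mass0 (F x) \<le> 2)
     \<and> (\<forall>H :: complex \<Rightarrow> (real \<Rightarrow> int).
          (\<forall>x\<in>sphere 0 1. is_chain1 (H x) \<and> bd1 (H x) = F x)
          \<and> mass_continuous_on (sphere 0 1) H
          \<longrightarrow> (\<exists>x0\<in>sphere 0 1. mass1 (H x0) > N))"
proof (intro exI[of _ "winding_pair (2 * N)"] conjI ballI allI impI)
  show "flat_continuous_on (sphere 0 1) (winding_pair (2 * N))"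
    using flat_continuous_on_winding_pair[of _ "\<lambda>_. 2 * N" "\<lambda>x. x"] by simp
next
  fix H :: "complex \<Rightarrow> real \<Rightarrow> int"
  assume "(\<forall>x\<in>sphere 0 1. is_chain1 (H x) \<and> bd1 (H x) = winding_pair (2 * N) x)
    \<and> mass_continuous_on (sphere 0 1) H"
  then show "\<exists>x0\<in>sphere 0 1. mass1 (H x0) > N"
    using winding_pair_filling_mass_gt[OF assms] by blast
qed (simp_all add: winding_pair_in_cycles0 mass0_winding_pair_le contractible_family_winding_pair)

end
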